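(* Let $f_1,\dots,f_n:\mathbb{R}^d\to\mathbb{R}$ be convex and differentiable, each with $L$-Lipschitz gradient, and let $f=\frac1n\sum_{i=1}^n f_i$ be $\lambda$-strongly convex with minimizer $x^*$. Fix $S\subseteq[n]$, a step size $\eta>0$, an epoch length $m\ge 1$, and parameters $c>0$, $\beta>0$, $\kappa>1$. Define $$\gamma=\kappa\Big[1-\big(1-\tfrac1\kappa\big)^m\Big]\Big(2c\eta\big(1-L\eta(1+\beta)\big)-\tfrac1n-\tfrac{2c}{\kappa\lambda}\Big),$$ $$\theta=\max\Big\{\tfrac{2c}{\gamma\lambda}\big(1-\tfrac1\kappa\big)^m+\tfrac{2Lc\eta^2}{\gamma}\big(1+\tfrac1\beta\big)\kappa\Big[1-\big(1-\tfrac1\kappa\big)^m\Big],\ \big(1-\tfrac1\kappa\big)^m\Big\}.$$ Suppose $$\frac1\kappa+2Lc\eta^2\Big(1+\frac1\beta\Big)\le\frac1n,\qquad \gamma>0,\qquad \theta<1,$$ and that the epoch-end selection probabilities satisfy $p_j\propto(1-\frac1\kappa)^{m-j}$, $j=1,\dots,m$. Then the iterates of the synchronous HSAG algorithm (described in the context) satisfy, for every $k\ge 0$, $$\mathbb{E}\Big[f(\tilde x^{k+1})-f(x^* )+\tfrac1\gamma\tilde G_{k+1}\Big]\le\theta\,\mathbb{E}\Big[f(\tilde x^{k})-f(x^* )+\tfrac1\gamma\tilde G_{k}\Big].$$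
   Context: Notation: $[n]=\{1,\dots,n\}$; for a differentiable convex $g$, the Bregman divergence is $D_g(x,y)=g(x)-g(y)-\langle\nabla g(y),x-y\rangle$. Synchronous HSAG algorithm (generic variance-reduced method with the HSAG schedule and epoch length $m$): start from $x^0\in\mathbb{R}^d$, set $\tilde x^0=x^0$ and $\alpha_i^0=x^0$ for all $i\in[n]$. The algorithm runs in epochs; epoch $k+1$ ($k=0,1,2,\dots$) consists of the steps $t=km,\dots,km+m-1$, and at its start $x^{km}=\tilde x^k$. At each step $t$, an index $i_t$ is drawn uniformly from $[n]$, independently of everything before, and $$x^{t+1}=x^t-\eta\Big(\nabla f_{i_t}(x^t)-\nabla f_{i_t}(\alpha_{i_t}^t)+\tfrac1n\textstyle\sum_{i=1}^n\nabla f_i(\alpha_i^t)\Big).$$ The auxiliary points $\alpha_i^t$ are updated by the HSAG schedule: for $i\in S$, $\alpha_i^{t+1}=x^t$ if $i_t=i$ and $\alpha_i^{t+1}=\alpha_i^t$ otherwise (SAGA-type); for $i\notin S$, $\alpha_i^t=\tilde x^k$ for all $t$ in epoch $k+1$ (SVRG-type, refreshed to the current iterate at the start of each epoch). At the end of epoch $k+1$, $\tilde x^{k+1}$ is chosen at random from $\{x^{km},x^{km+1},\dots,x^{km+m-1}\}$, selecting $x^{km+j-1}$ with probability $p_j$ ($j=1,\dots,m$), and $x^{(k+1)m}$ is set to $\tilde x^{k+1}$. (Special cases: $S=[n]$ gives SAGA, $S=\emptyset$ gives SVRG.) Define $\tilde G_k=\frac1n\sum_{i\in S}\big(f_i(\alpha_i^{km})-f_i(x^*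 )-\langle\nabla f_i(x^* ),\alpha_i^{km}-x^*\rangle\big)$. Expectations are over all random indices and epoch-end selections. *)

theory Defs
  imports "HOL-Analysis.Analysis" "HOL-Probability.Probability"
begin

definition strongly_convex_on :: "'a::real_normed_vector set \<Rightarrow> real \<Rightarrow> ('a \<Rightarrow> real) \<Rightarrow> bool" where
  "strongly_convex_on A lam F \<longleftrightarrow>
     (\<forall>x\<in>A. \<forall>y\<in>A. \<forall>t::real. 0 \<le> t \<and> t \<le> 1 \<longrightarrow>
        F ((1 - t) *\<^sub>R x + t *\<^sub>R y) \<le> (1 - t) * F x + t * F y - lam / 2 * t * (1 - t) * (norm (x - y))\<^sup>2)"

text \<open>State: (current iterate x^t, auxiliary points alpha^t). g i is the gradient of f_i.
  For i not in S the alpha stays fixed within the epoch (it equals the epoch anchor).\<close>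
definition hsag_step :: "nat \<Rightarrow> nat set \<Rightarrow> real \<Rightarrow> (nat \<Rightarrow> 'a \<Rightarrow> 'a::real_vector)
    \<Rightarrow> 'a \<times> (nat \<Rightarrow> 'a) \<Rightarrow> nat \<Rightarrow> 'a \<times> (nat \<Rightarrow> 'a)" where
  "hsag_step n S \<eta> g st i =
     (let x = fst st; \<alpha> = snd st in
       (x - \<eta> *\<^sub>R (g i x - g i (\<alpha> i) + (1 / real n) *\<^sub>R (\<Sum>j\<in>{1..n}. g j (\<alpha> j))),
        if i \<in> S then \<alpha>(i := x) else \<alpha>))"

text \<open>Run j steps with fresh uniform indices from {1..n}; returns the list of iterates
  before each step [x^t, ..., x^(t+j-1)] together with the final state.\<close>
fun hsag_run :: "nat \<Rightarrow> nat set \<Rightarrow> real \<Rightarrow> (nat \<Rightarrow> 'a \<Rightarrow> 'a::real_vector) \<Rightarrow> nat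
    \<Rightarrow> 'a \<times> (nat \<Rightarrow> 'a) \<Rightarrow> ('a list \<times> ('a \<times> (nat \<Rightarrow> 'a))) pmf" where
  "hsag_run n S \<eta> g 0 st = return_pmf ([], st)"
| "hsag_run n S \<eta> g (Suc j) st =
     bind_pmf (pmf_of_set {1..n})
       (\<lambda>i. map_pmf (\<lambda>(xs, st'). (fst st # xs, st')) (hsag_run n S \<eta> g j (hsag_step n S \<eta> g st i)))"

definition sel_pmf :: "nat \<Rightarrow> real \<Rightarrow> nat pmf" where
  "sel_pmf m \<kappa> = embed_pmf (\<lambda>j. if j \<in> {1..m}
       then (1 - 1/\<kappa>) ^ (m - j) / (\<Sum>l\<in>{1..m}. (1 - 1/\<kappa>) ^ (m - l)) else 0)"

text \<open>One epoch: run m steps from (x~^k, alpha^{km}), pick x~^{k+1} = x^{km+j-1} with prob. p_j,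
  keep SAGA-type points (i in S) and refresh SVRG-type points (i not in S) to x~^{k+1}.
  The resulting state is (x~^{k+1}, alpha^{(k+1)m}).\<close>
definition hsag_epoch :: "nat \<Rightarrow> nat set \<Rightarrow> real \<Rightarrow> (nat \<Rightarrow> 'a \<Rightarrow> 'a::real_vector) \<Rightarrow> nat \<Rightarrow> real
    \<Rightarrow> 'a \<times> (nat \<Rightarrow> 'a) \<Rightarrow> ('a \<times> (nat \<Rightarrow> 'a)) pmf" where
  "hsag_epoch n S \<eta> g m \<kappa> st =
     bind_pmf (hsag_run n S \<eta> g m st)
       (\<lambda>(xs, st'). map_pmf (\<lambda>j. let y = xs ! (j - 1) in (y, \<lambda>i. if i \<in> S then snd st' i else y))
                      (sel_pmf m \<kappa>))"

text \<open>Joint distribution of (x~^k, alpha^{km}).\<close>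
fun hsag_dist :: "nat \<Rightarrow> nat set \<Rightarrow> real \<Rightarrow> (nat \<Rightarrow> 'a \<Rightarrow> 'a::real_vector) \<Rightarrow> nat \<Rightarrow> real
    \<Rightarrow> 'a \<Rightarrow> nat \<Rightarrow> ('a \<times> (nat \<Rightarrow> 'a)) pmf" where
  "hsag_dist n S \<eta> g m \<kappa> x0 0 = return_pmf (x0, \<lambda>_. x0)"
| "hsag_dist n S \<eta> g m \<kappa> x0 (Suc k) = bind_pmf (hsag_dist n S \<eta> g m \<kappa> x0 k) (hsag_epoch n S \<eta> g m \<kappa>)"

definition Gtilde :: "nat \<Rightarrow> nat set \<Rightarrow> (nat \<Rightarrow> 'a \<Rightarrow> real) \<Rightarrow> (nat \<Rightarrow> 'a \<Rightarrow> 'a::real_inner)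
    \<Rightarrow> 'a \<Rightarrow> (nat \<Rightarrow> 'a) \<Rightarrow> real" where
  "Gtilde n S f g xs \<alpha> = (1 / real n) * (\<Sum>i\<in>S. f i (\<alpha> i) - f i xs - inner (g i xs) (\<alpha> i - xs))"

end

theory Submission
  imports Defs
begin

text \<open>
  Inside an epoch with anchor \<open>z\<close>, one HSAG step decreases
  \<open>T(x, \<alpha>) = c \<parallel>x - x\<^sup>*\<parallel>\<^sup>2 + G(\<alpha>)\<close> in expectation by the factor \<open>\<rho> = 1 - 1/\<kappa>\<close>, up to a gain
  \<open>-\<delta> (f(x) - f(x\<^sup>*))\<close> and a drift \<open>K H(z)\<close>, where \<open>H(z)\<close> is the part of the Bregman divergence
  carried by the SVRG-type points, all sitting at \<open>z\<close>. The variance of the search direction is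
  bounded by Bregman divergences through co-coercivity of the gradients. Unrolling the epoch, the
  gains \<open>\<rho>^(m-j) \<delta> (f(x\<^sub>j) - f(x\<^sup>*))\<close> add up to \<open>\<gamma>\<close> times the expected gap of the output selected
  with the weights \<open>p\<^sub>j\<close>; strong convexity and \<open>H(z) \<le> f(z) - f(x\<^sup>*)\<close> bound what remains by \<open>\<theta>\<close>
  times the potential at the anchor.
\<close>

definition bregman :: "('a::real_inner \<Rightarrow> real) \<Rightarrow> ('a \<Rightarrow> 'a) \<Rightarrow> 'a \<Rightarrow> 'a \<Rightarrow> real" where
  "bregman f g x y = f x - f y - inner (g y) (x - y)"

lemma has_real_derivative_along_line:
  fixes f :: "'a::real_inner \<Rightarrow> real"
  assumes grad: "\<And>x. (f has_derivative (\<lambda>h. inner (g x) h)) (at x)"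
  shows "((\<lambda>t. f (x + t *\<^sub>R d)) has_real_derivative inner (g (x + t *\<^sub>R d)) d) (at t)"
proof -
  have "((\<lambda>t. x + t *\<^sub>R d) has_derivative (\<lambda>s. s *\<^sub>R d)) (at t)"
    by (auto intro!: derivative_eq_intros)
  from has_derivative_compose[OF this grad]
  show ?thesis by (simp add: has_field_derivative_def o_def mult_commute_abs)
qed

lemma bregman_nonneg:
  fixes f :: "'a::real_inner \<Rightarrow> real"
  assumes conv: "convex_on UNIV f"
    and grad: "\<And>x. (f has_derivative (\<lambda>h. inner (g x) h)) (at x)"
  shows "0 \<le> bregman f g y x"
proof -
  define h where "h t = f (x + t *\<^sub>R (y - x))" for t
  have "convex_on UNIV h"
  proof (rule convex_onI)
    fix t a b :: real assume "0 < t" "t < 1"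
    moreover have "x + ((1 - t) *\<^sub>R a + t *\<^sub>R b) *\<^sub>R (y - x)
        = (1 - t) *\<^sub>R (x + a *\<^sub>R (y - x)) + t *\<^sub>R (x + b *\<^sub>R (y - x))"
      by (simp add: algebra_simps)
    ultimately show "h ((1 - t) *\<^sub>R a + t *\<^sub>R b) \<le> (1 - t) * h a + t * h b"
      unfolding h_def using convex_onD[OF conv, of t "x + a *\<^sub>R (y - x)" "x + b *\<^sub>R (y - x)"]
      by simp
  qed simp
  moreover have "(h has_real_derivative inner (g x) (y - x)) (at 0 within UNIV)"
    unfolding h_def using has_real_derivative_along_line[OF grad, of x "y - x" 0] by simp
  ultimately have "h 1 - h 0 \<ge> inner (g x) (y - x) * (1 - 0)"
    by (intro convex_on_imp_above_tangent[where A=UNIV]) auto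
  thus ?thesis by (simp add: h_def bregman_def)
qed

lemma bregman_le_lipschitz_gradient:
  fixes f :: "'a::real_inner \<Rightarrow> real"
  assumes grad: "\<And>x. (f has_derivative (\<lambda>h. inner (g x) h)) (at x)"
    and lip: "\<And>x y. norm (g x - g y) \<le> L * norm (x - y)"
  shows "bregman f g y x \<le> L / 2 * (norm (y - x))\<^sup>2"
proof -
  define d where "d = y - x"
  define \<psi> where "\<psi> t = f (x + t *\<^sub>R d) - f x - t * inner (g x) d - L / 2 * t\<^sup>2 * (norm d)\<^sup>2" for t
  have D: "(\<psi> has_real_derivative (inner (g (x + t *\<^sub>R d)) d - inner (g x) d - L * t * (norm d)\<^sup>2)) (at t)"
    for t unfolding \<psi>_def
    by (rule derivative_eq_intros has_real_derivative_along_line[OF grad] refl | simp)+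
  have "\<psi> 1 \<le> \<psi> 0"
  proof (rule DERIV_nonpos_imp_nonincreasing[of 0 1])
    fix t :: real assume t: "0 \<le> t" "t \<le> 1"
    have "inner (g (x + t *\<^sub>R d)) d - inner (g x) d = inner (g (x + t *\<^sub>R d) - g x) d"
      by (simp add: inner_diff_left)
    also have "\<dots> \<le> norm (g (x + t *\<^sub>R d) - g x) * norm d" by (rule norm_cauchy_schwarz)
    also have "\<dots> \<le> (L * norm (t *\<^sub>R d)) * norm d"
      using lip[of "x + t *\<^sub>R d" x] by (intro mult_right_mono) auto
    also have "\<dots> = L * t * (norm d)\<^sup>2" using t by (simp add: power2_eq_square)
    finally show "\<exists>y. (\<psi> has_real_derivative y) (at t) \<and> y \<le> 0" using D by fastforce
  qed simp
  thus ?thesis by (simp add: \<psi>_def d_def bregman_def)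
qed

text \<open>Co-coercivity: compare \<open>f\<close> at \<open>w = x - (1/L) (g x - g y)\<close> from below (convexity at \<open>y\<close>)
  and from above (smoothness at \<open>x\<close>).\<close>
lemma power2_norm_gradient_diff_le_bregman:
  fixes f :: "'a::real_inner \<Rightarrow> real"
  assumes conv: "convex_on UNIV f"
    and grad: "\<And>x. (f has_derivative (\<lambda>h. inner (g x) h)) (at x)"
    and lip: "\<And>x y. norm (g x - g y) \<le> L * norm (x - y)"
    and L: "L \<ge> 0"
  shows "(norm (g x - g y))\<^sup>2 \<le> 2 * L * bregman f g x y"
proof (cases "L = 0")
  case True
  then show ?thesis using lip[of x y] by simp
next
  case False
  with L have Lp: "L > 0" by simp
  define u where "u = g x - g y"
  define w where "w = x - (1 / L) *\<^sub>R u"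
  have below: "0 \<le> bregman f g w y" by (rule bregman_nonneg[OF conv grad])
  have above: "bregman f g w x \<le> L / 2 * (norm (w - x))\<^sup>2"
    by (rule bregman_le_lipschitz_gradient[OF grad lip])
  have "inner (g y) (w - y) = inner (g y) (x - y) + inner (g y) (w - x)"
    by (simp add: inner_diff_right)
  with below above have "inner (g y) (w - x) - inner (g x) (w - x) - L / 2 * (norm (w - x))\<^sup>2
      \<le> bregman f g x y"
    by (simp add: bregman_def)
  moreover have "inner (g y) (w - x) - inner (g x) (w - x) = (1 / L) * (norm u)\<^sup>2"
    by (simp add: w_def u_def power2_norm_eq_inner inner_diff_left diff_divide_distrib)
  moreover have "L / 2 * (norm (w - x))\<^sup>2 = (1 / (2 * L)) * (norm u)\<^sup>2"
    using Lp by (simp add: w_def power2_eq_square field_simps)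
  ultimately have "(1 / (2 * L)) * (norm u)\<^sup>2 \<le> bregman f g x y"
    by (simp add: field_simps)
  hence "2 * L * ((1 / (2 * L)) * (norm u)\<^sup>2) \<le> 2 * L * bregman f g x y"
    using Lp by (intro mult_left_mono) auto
  thus ?thesis using Lp by (simp add: u_def)
qed

lemma gradient_eq_0_at_minimum:
  fixes F :: "'a::real_inner \<Rightarrow> real"
  assumes "(F has_derivative (\<lambda>h. inner v h)) (at x)" and "\<And>y. F x \<le> F y"
  shows "v = 0"
proof -
  have "(\<lambda>h. inner v h) = (\<lambda>h. 0)"
    using differential_zero_maxmin[of x UNIV F] assms by auto
  hence "inner v v = 0" by metis
  thus ?thesis by simp
qed

lemma strongly_convex_on_quadratic_growth:
  fixes F :: "'a::real_normed_vector \<Rightarrow> real"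
  assumes sconv: "strongly_convex_on UNIV lam F" and min: "\<And>y. F x\<^sub>0 \<le> F y"
  shows "lam / 2 * (norm (x - x\<^sub>0))\<^sup>2 \<le> F x - F x\<^sub>0"
proof (rule ccontr)
  define a where "a = lam / 2 * (norm (x - x\<^sub>0))\<^sup>2"
  define \<Delta> where "\<Delta> = F x - F x\<^sub>0"
  assume "\<not> ?thesis"
  hence a\<Delta>: "\<Delta> < a" by (simp add: a_def \<Delta>_def)
  have "0 \<le> \<Delta>" using min[of x] by (simp add: \<Delta>_def)
  with a\<Delta> have ap: "a > 0" by simp
  \<comment> \<open>a point on the segment from \<open>x\<^sub>0\<close> to \<open>x\<close> that would lie below the minimum\<close>
  define t where "t = (a - \<Delta>) / (2 * a)"
  have t: "0 < t" "t \<le> 1" using a\<Delta> ap \<open>0 \<le> \<Delta>\<close> by (auto simp: t_def field_simps)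
  have "F x\<^sub>0 \<le> F ((1 - t) *\<^sub>R x\<^sub>0 + t *\<^sub>R x)" by (rule min)
  also have "\<dots> \<le> (1 - t) * F x\<^sub>0 + t * F x - lam / 2 * t * (1 - t) * (norm (x\<^sub>0 - x))\<^sup>2"
    using sconv t unfolding strongly_convex_on_def by auto
  finally have "t * ((1 - t) * a) \<le> t * \<Delta>"
    by (simp add: a_def \<Delta>_def norm_minus_commute algebra_simps)
  hence "(1 - t) * a \<le> \<Delta>" using t by simp
  moreover have "(1 - t) * a = (a + \<Delta>) / 2" using ap by (simp add: t_def field_simps)
  ultimately show False using a\<Delta> by simp
qed

lemma power2_norm_diff_le_young:
  fixes a w :: "'a::real_inner"
  assumes "\<beta> > 0"
  shows "(norm (a - w))\<^sup>2 \<le> (1 + \<beta>) * (norm a)\<^sup>2 + (1 + 1/\<beta>) * (norm w)\<^sup>2"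
proof -
  have "0 \<le> (norm (\<beta> *\<^sub>R a + w))\<^sup>2 / \<beta>" using assms by simp
  also have "\<dots> = \<beta> * inner a a + 2 * inner a w + (1/\<beta>) * inner w w"
    using assms unfolding power2_norm_eq_inner
    by (simp add: inner_add_left inner_add_right inner_commute field_simps)
  finally show ?thesis
    by (simp add: power2_norm_eq_inner inner_diff_left inner_diff_right inner_commute algebra_simps)
qed

lemma power2_norm_diff_scaleR:
  fixes a b :: "'a::real_inner"
  shows "(norm (a - t *\<^sub>R b))\<^sup>2 = (norm a)\<^sup>2 - 2 * t * inner b a + t\<^sup>2 * (norm b)\<^sup>2"
  unfolding power2_norm_eq_inner
  by (simp add: inner_diff_left inner_diff_right inner_commute algebra_simps power2_eq_square)

lemma sum_power2_norm_centered_le: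
  fixes b :: "'i \<Rightarrow> 'a::real_inner"
  assumes "finite A" "A \<noteq> {}"
  shows "(\<Sum>i\<in>A. (norm (b i - (1 / real (card A)) *\<^sub>R (\<Sum>j\<in>A. b j)))\<^sup>2) \<le> (\<Sum>i\<in>A. (norm (b i))\<^sup>2)"
proof -
  define N where "N = real (card A)"
  define s where "s = (\<Sum>j\<in>A. b j)"
  have Np: "N > 0" using assms by (simp add: N_def card_gt_0_iff)
  have "(\<Sum>i\<in>A. (norm (b i - (1/N) *\<^sub>R s))\<^sup>2)
      = (\<Sum>i\<in>A. (norm (b i))\<^sup>2) - 2 * (1/N) * inner s s + N * ((1/N)\<^sup>2 * (norm s)\<^sup>2)"
    by (simp add: power2_norm_diff_scaleR sum.distrib sum_subtractf sum_distrib_left[symmetric]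
        sum_divide_distrib[symmetric] inner_sum_right s_def N_def)
  also have "\<dots> = (\<Sum>i\<in>A. (norm (b i))\<^sup>2) - (1/N) * (norm s)\<^sup>2"
    using Np unfolding power2_norm_eq_inner by (simp add: power2_eq_square field_simps)
  also have "\<dots> \<le> (\<Sum>i\<in>A. (norm (b i))\<^sup>2)" using Np by simp
  finally show ?thesis by (simp add: N_def s_def)
qed

lemma expectation_bind_pmf_finite:
  fixes h :: "'b \<Rightarrow> real"
  assumes "finite (set_pmf p)" "\<And>x. x \<in> set_pmf p \<Longrightarrow> finite (set_pmf (f x))"
  shows "measure_pmf.expectation (p \<bind> f) h = measure_pmf.expectation p (\<lambda>x. measure_pmf.expectation (f x) h)"
proof -
  have "measure_pmf.expectation (p \<bind> f) h = (\<Sum>a\<in>set_pmf p. pmf p a *\<^sub>R measure_pmf.expectation (f a) h)"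
    using assms by (intro pmf_expectation_bind) auto
  also have "\<dots> = measure_pmf.expectation p (\<lambda>x. measure_pmf.expectation (f x) h)"
    using assms by (subst integral_measure_pmf[of "set_pmf p"]) auto
  finally show ?thesis .
qed

lemma expectation_mono_pmf_finite:
  fixes u v :: "'b \<Rightarrow> real"
  assumes "finite (set_pmf p)" "\<And>x. x \<in> set_pmf p \<Longrightarrow> u x \<le> v x"
  shows "measure_pmf.expectation p u \<le> measure_pmf.expectation p v"
  using assms by (intro integral_mono_AE integrable_measure_pmf_finite) (auto simp: AE_measure_pmf_iff)

lemma expectation_add_const_pmf_finite:
  fixes u :: "'b \<Rightarrow> real"
  assumes "finite (set_pmf p)"
  shows "measure_pmf.expectation p (\<lambda>x. a + u x) = a + measure_pmf.expectation p u"
  using assms by (simp add: integrable_measure_pmf_finite)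

lemma finite_set_pmf_hsag_run: "n \<ge> 1 \<Longrightarrow> finite (set_pmf (hsag_run n S \<eta> g j st))"
  by (induction j arbitrary: st) auto

lemma pmf_sel_pmf:
  fixes \<kappa> :: real
  assumes "\<kappa> > 1" and "m \<ge> 1"
  shows "pmf (sel_pmf m \<kappa>) j
      = (if j \<in> {1..m} then (1 - 1/\<kappa>) ^ (m - j) / (\<Sum>l\<in>{1..m}. (1 - 1/\<kappa>) ^ (m - l)) else 0)"
proof -
  define w where "w j = (if j \<in> {1..m}
      then (1 - 1/\<kappa>) ^ (m - j) / (\<Sum>l\<in>{1..m}. (1 - 1/\<kappa>) ^ (m - l)) else 0)" for j
  have "1 - 1/\<kappa> > 0" using assms by (simp add: field_simps)
  hence W: "(\<Sum>l\<in>{1..m}. (1 - 1/\<kappa>) ^ (m - l)) > 0"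
    using assms by (intro sum_pos) auto
  hence nonneg: "\<And>x. 0 \<le> w x" using \<open>1 - 1/\<kappa> > 0\<close> by (auto simp: w_def)
  have "(\<integral>\<^sup>+x. ennreal (w x) \<partial>count_space UNIV) = (\<Sum>x\<in>{1..m}. ennreal (w x))"
    by (rule nn_integral_count_space') (auto simp: w_def)
  also have "\<dots> = ennreal (\<Sum>x\<in>{1..m}. w x)" using nonneg by (simp add: sum_ennreal)
  also have "(\<Sum>x\<in>{1..m}. w x) = 1" using W by (simp add: w_def sum_divide_distrib[symmetric])
  finally have "(\<integral>\<^sup>+x. ennreal (w x) \<partial>count_space UNIV) = 1" by simp
  moreover have "sel_pmf m \<kappa> = embed_pmf w" unfolding sel_pmf_def w_def ..
  ultimately have "pmf (sel_pmf m \<kappa>) j = w j" using pmf_embed_pmf[OF nonneg] by simp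
  thus ?thesis by (simp only: w_def)
qed

lemma set_pmf_sel_pmf_subset: "\<kappa> > 1 \<Longrightarrow> m \<ge> 1 \<Longrightarrow> set_pmf (sel_pmf m \<kappa>) \<subseteq> {1..m}"
  by (auto simp: set_pmf_iff pmf_sel_pmf split: if_splits)

lemma finite_set_pmf_sel_pmf: "\<kappa> > 1 \<Longrightarrow> m \<ge> 1 \<Longrightarrow> finite (set_pmf (sel_pmf m \<kappa>))"
  using set_pmf_sel_pmf_subset finite_subset by blast

lemma finite_set_pmf_hsag_epoch:
  assumes "n \<ge> 1" "\<kappa> > 1" "m \<ge> 1"
  shows "finite (set_pmf (hsag_epoch n S \<eta> g m \<kappa> st))"
proof -
  from finite_set_pmf_sel_pmf[OF assms(2,3)] finite_set_pmf_hsag_run[OF assms(1), of S \<eta> g m st] show ?thesis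
    unfolding hsag_epoch_def set_bind_pmf by (intro finite_UN_I) (auto split: prod.split)
qed

lemma finite_set_pmf_hsag_dist:
  "n \<ge> 1 \<Longrightarrow> \<kappa> > 1 \<Longrightarrow> m \<ge> 1 \<Longrightarrow> finite (set_pmf (hsag_dist n S \<eta> g m \<kappa> x0 k))"
  by (induction k) (auto intro: finite_set_pmf_hsag_epoch)

lemma hsag_dist_svrg_points:
  "(x, \<alpha>) \<in> set_pmf (hsag_dist n S \<eta> g m \<kappa> x0 k) \<Longrightarrow> i \<notin> S \<Longrightarrow> \<alpha> i = x"
  by (induction k arbitrary: x \<alpha>) (auto simp: hsag_epoch_def Let_def split: prod.splits)

locale hsag_step_setting =
  fixes f :: "nat \<Rightarrow> 'a::euclidean_space \<Rightarrow> real"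
    and g :: "nat \<Rightarrow> 'a \<Rightarrow> 'a"
    and n :: nat and S :: "nat set"
    and L lam \<eta> c \<beta> \<kappa> :: real
    and xs :: 'a
  assumes n_pos: "n \<ge> 1"
    and conv: "\<And>i. i \<in> {1..n} \<Longrightarrow> convex_on UNIV (f i)"
    and grad: "\<And>i x. i \<in> {1..n} \<Longrightarrow> (f i has_derivative (\<lambda>h. inner (g i x) h)) (at x)"
    and lip: "\<And>i x y. i \<in> {1..n} \<Longrightarrow> norm (g i x - g i y) \<le> L * norm (x - y)"
    and lam_pos: "lam > 0"
    and sconv: "strongly_convex_on UNIV lam (\<lambda>x. (1 / real n) * (\<Sum>i\<in>{1..n}. f i x))"
    and xs_min: "\<And>y. (1 / real n) * (\<Sum>i\<in>{1..n}. f i xs) \<le> (1 / real n) * (\<Sum>i\<in>{1..n}. f i y)"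
    and S_sub: "S \<subseteq> {1..n}"
    and eta_pos: "\<eta> > 0"
    and c_pos: "c > 0" and beta_pos: "\<beta> > 0" and kappa_gt: "\<kappa> > 1"
    and cond1: "1/\<kappa> + 2 * L * c * \<eta>\<^sup>2 * (1 + 1/\<beta>) \<le> 1 / real n"
begin

definition F :: "'a \<Rightarrow> real" where "F x = (1 / real n) * (\<Sum>i\<in>{1..n}. f i x)"

abbreviation D :: "nat \<Rightarrow> 'a \<Rightarrow> real" where "D i x \<equiv> bregman (f i) (g i) x xs"

abbreviation G :: "(nat \<Rightarrow> 'a) \<Rightarrow> real" where "G \<alpha> \<equiv> Gtilde n S f g xs \<alpha>"

text \<open>The divergence carried by the SVRG-type points, which all sit at the anchor \<open>z\<close> of the epoch.\<close>
definition H :: "'a \<Rightarrow> real" where "H z = (1 / real n) * (\<Sum>i\<in>{1..n} - S. D i z)"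

definition lyap :: "'a \<times> (nat \<Rightarrow> 'a) \<Rightarrow> real" where
  "lyap st = c * (norm (fst st - xs))\<^sup>2 + G (snd st)"

definition dir :: "'a \<Rightarrow> (nat \<Rightarrow> 'a) \<Rightarrow> nat \<Rightarrow> 'a" where
  "dir x \<alpha> i = g i x - g i (\<alpha> i) + (1 / real n) *\<^sub>R (\<Sum>j\<in>{1..n}. g j (\<alpha> j))"

definition \<rho> :: real where "\<rho> = 1 - 1/\<kappa>"
definition K :: real where "K = 2 * L * c * \<eta>\<^sup>2 * (1 + 1/\<beta>)"
definition \<delta> :: real where "\<delta> = 2 * c * \<eta> * (1 - L * \<eta> * (1 + \<beta>)) - 1 / real n - 2 * c / (\<kappa> * lam)"

lemma n_gt_0: "real n > 0" using n_pos by simp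

lemma finite_S: "finite S" using S_sub finite_subset by blast

lemma L_nonneg: "L \<ge> 0"
proof -
  obtain e :: 'a where e: "e \<noteq> 0" using nonzero_Basis SOME_Basis by blast
  have "0 \<le> norm (g 1 e - g 1 0)" by simp
  also have "\<dots> \<le> L * norm (e - 0)" using lip[of 1 e 0] n_pos by simp
  finally show ?thesis using e by (simp add: zero_le_mult_iff)
qed

lemma K_nonneg: "K \<ge> 0" unfolding K_def using L_nonneg c_pos beta_pos by simp

lemma rho_pos: "\<rho> > 0" using kappa_gt by (simp add: \<rho>_def field_simps)

lemma D_nonneg: "i \<in> {1..n} \<Longrightarrow> 0 \<le> D i x"
  using bregman_nonneg conv grad by blast

lemma power2_norm_gradient_diff_le_D:
  "i \<in> {1..n} \<Longrightarrow> (norm (g i x - g i xs))\<^sup>2 \<le> 2 * L * D i x"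
  using power2_norm_gradient_diff_le_bregman conv grad lip L_nonneg by blast

lemma sum_gradient_at_minimizer: "(\<Sum>i\<in>{1..n}. g i xs) = 0"
proof (rule gradient_eq_0_at_minimum)
  show "((\<lambda>x. \<Sum>i\<in>{1..n}. f i x) has_derivative (\<lambda>h. inner (\<Sum>i\<in>{1..n}. g i xs) h)) (at xs)"
    unfolding inner_sum_left by (intro has_derivative_sum grad) simp
  show "(\<Sum>i\<in>{1..n}. f i xs) \<le> (\<Sum>i\<in>{1..n}. f i y)" for y
    using xs_min[of y] n_gt_0 by (simp add: divide_le_cancel)
qed

lemma F_gap_eq: "F x - F xs = (1 / real n) * (\<Sum>i\<in>{1..n}. D i x)"
proof -
  have "(\<Sum>i\<in>{1..n}. D i x)
      = (\<Sum>i\<in>{1..n}. f i x) - (\<Sum>i\<in>{1..n}. f i xs) - inner (\<Sum>i\<in>{1..n}. g i xs) (x - xs)"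
    by (simp add: bregman_def sum_subtractf inner_sum_left)
  thus ?thesis using sum_gradient_at_minimizer by (simp add: F_def right_diff_distrib)
qed

lemma sum_D_eq: "(\<Sum>i\<in>{1..n}. D i x) = real n * (F x - F xs)"
  using n_gt_0 by (simp add: F_gap_eq)

lemma F_gap_nonneg: "0 \<le> F x - F xs"
  using xs_min[of x] by (simp add: F_def)

lemma quadratic_growth: "lam / 2 * (norm (x - xs))\<^sup>2 \<le> F x - F xs"
  using strongly_convex_on_quadratic_growth[OF sconv xs_min] by (simp add: F_def)

lemma G_eq: "G \<alpha> = (1 / real n) * (\<Sum>i\<in>S. D i (\<alpha> i))"
  by (simp add: Gtilde_def bregman_def)

lemma G_nonneg: "0 \<le> G \<alpha>"
  unfolding G_eq using S_sub n_gt_0 by (intro mult_nonneg_nonneg sum_nonneg D_nonneg) auto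

lemma G_cong: "(\<And>i. i \<in> S \<Longrightarrow> \<alpha> i = \<alpha>' i) \<Longrightarrow> G \<alpha> = G \<alpha>'"
  unfolding G_eq by simp

lemma G_fun_upd:
  assumes "i \<in> S"
  shows "G (\<alpha>(i := x)) = G \<alpha> + (1 / real n) * (D i x - D i (\<alpha> i))"
proof -
  have "(\<Sum>j\<in>S. D j ((\<alpha>(i := x)) j)) = D i x + (\<Sum>j\<in>S - {i}. D j (\<alpha> j))"
    using assms finite_S by (simp add: sum.remove)
  also have "(\<Sum>j\<in>S - {i}. D j (\<alpha> j)) = (\<Sum>j\<in>S. D j (\<alpha> j)) - D i (\<alpha> i)"
    using assms finite_S by (simp add: sum.remove)
  finally have "(\<Sum>j\<in>S. D j ((\<alpha>(i := x)) j)) = (\<Sum>j\<in>S. D j (\<alpha> j)) + (D i x - D i (\<alpha> i))"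
    by simp
  thus ?thesis unfolding G_eq by (simp only: distrib_left)
qed

lemma H_le_F_gap: "H z \<le> F z - F xs"
proof -
  have "(\<Sum>i\<in>{1..n} - S. D i z) \<le> (\<Sum>i\<in>{1..n}. D i z)"
    by (intro sum_mono2) (auto intro: D_nonneg)
  thus ?thesis unfolding H_def F_gap_eq using n_gt_0 by (simp add: divide_right_mono)
qed

lemma sum_D_aux_points:
  assumes "\<forall>i\<in>{1..n} - S. \<alpha> i = z"
  shows "(\<Sum>i\<in>{1..n}. D i (\<alpha> i)) = real n * (G \<alpha> + H z)"
proof -
  have "(\<Sum>i\<in>{1..n}. D i (\<alpha> i)) = (\<Sum>i\<in>{1..n} - S. D i (\<alpha> i)) + (\<Sum>i\<in>S. D i (\<alpha> i))"
    using S_sub by (simp add: sum.subset_diff)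
  also have "(\<Sum>i\<in>{1..n} - S. D i (\<alpha> i)) = (\<Sum>i\<in>{1..n} - S. D i z)"
    using assms by (intro sum.cong) auto
  finally show ?thesis using n_gt_0 by (simp add: G_eq H_def distrib_left)
qed

lemma hsag_step_eq:
  "hsag_step n S \<eta> g (x, \<alpha>) i = (x - \<eta> *\<^sub>R dir x \<alpha> i, if i \<in> S then \<alpha>(i := x) else \<alpha>)"
  by (simp add: hsag_step_def dir_def)

lemma hsag_step_svrg_points:
  "\<forall>t\<in>{1..n} - S. \<alpha> t = z \<Longrightarrow> \<forall>t\<in>{1..n} - S. snd (hsag_step n S \<eta> g (x, \<alpha>) i) t = z"
  by (simp add: hsag_step_eq)

lemma F_gap_le_mean_inner_dir:
  "F x - F xs \<le> (1 / real n) * (\<Sum>i\<in>{1..n}. inner (dir x \<alpha> i) (x - xs))"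
proof -
  have "(\<Sum>i\<in>{1..n}. f i x - f i xs) \<le> (\<Sum>i\<in>{1..n}. inner (g i x) (x - xs))"
  proof (rule sum_mono)
    fix i assume "i \<in> {1..n}"
    hence "0 \<le> bregman (f i) (g i) xs x" using bregman_nonneg conv grad by blast
    thus "f i x - f i xs \<le> inner (g i x) (x - xs)" by (simp add: bregman_def inner_diff_right)
  qed
  also have "\<dots> = inner (\<Sum>i\<in>{1..n}. g i x) (x - xs)" by (simp add: inner_sum_left)
  also have "(\<Sum>i\<in>{1..n}. g i x) = (\<Sum>i\<in>{1..n}. dir x \<alpha> i)"
    using n_gt_0 by (simp add: dir_def sum.distrib sum_subtractf sum_constant_scaleR)
  finally show ?thesis
    using n_gt_0 by (simp add: F_def inner_sum_left sum_subtractf divide_right_mono diff_divide_distrib[symmetric])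
qed

lemma mean_power2_norm_dir_le:
  assumes "\<forall>i\<in>{1..n} - S. \<alpha> i = z"
  shows "(1 / real n) * (\<Sum>i\<in>{1..n}. (norm (dir x \<alpha> i))\<^sup>2)
     \<le> (1 + \<beta>) * (2 * L * (F x - F xs)) + (1 + 1/\<beta>) * (2 * L * (G \<alpha> + H z))"
proof -
  define A where "A = {1..n}"
  define a where "a i = g i x - g i xs" for i
  define b where "b i = g i (\<alpha> i) - g i xs" for i
  have "(\<Sum>j\<in>A. b j) = (\<Sum>j\<in>A. g j (\<alpha> j))"
    using sum_gradient_at_minimizer by (simp add: A_def b_def sum_subtractf)
  hence dir_eq: "dir x \<alpha> i = a i - (b i - (1 / real (card A)) *\<^sub>R (\<Sum>j\<in>A. b j))" for i
    by (simp add: dir_def a_def b_def A_def)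
  have "(\<Sum>i\<in>A. (norm (dir x \<alpha> i))\<^sup>2) \<le> (\<Sum>i\<in>A. (1 + \<beta>) * (norm (a i))\<^sup>2
      + (1 + 1/\<beta>) * (norm (b i - (1 / real (card A)) *\<^sub>R (\<Sum>j\<in>A. b j)))\<^sup>2)"
    unfolding dir_eq by (intro sum_mono power2_norm_diff_le_young beta_pos)
  also have "\<dots> = (1 + \<beta>) * (\<Sum>i\<in>A. (norm (a i))\<^sup>2)
      + (1 + 1/\<beta>) * (\<Sum>i\<in>A. (norm (b i - (1 / real (card A)) *\<^sub>R (\<Sum>j\<in>A. b j)))\<^sup>2)"
    by (simp add: sum.distrib sum_distrib_left)
  also have "\<dots> \<le> (1 + \<beta>) * (\<Sum>i\<in>A. (norm (a i))\<^sup>2) + (1 + 1/\<beta>) * (\<Sum>i\<in>A. (norm (b i))\<^sup>2)"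
    using beta_pos n_pos by (intro add_left_mono mult_left_mono sum_power2_norm_centered_le) (auto simp: A_def)
  also have "\<dots> \<le> (1 + \<beta>) * (\<Sum>i\<in>A. 2 * L * D i x) + (1 + 1/\<beta>) * (\<Sum>i\<in>A. 2 * L * D i (\<alpha> i))"
    unfolding a_def b_def using beta_pos
    by (intro add_mono mult_left_mono sum_mono power2_norm_gradient_diff_le_D) (auto simp: A_def)
  also have "\<dots> = (1 + \<beta>) * (2 * L * (\<Sum>i\<in>A. D i x)) + (1 + 1/\<beta>) * (2 * L * (\<Sum>i\<in>A. D i (\<alpha> i)))"
    by (simp add: sum_distrib_left)
  also have "\<dots> = real n * ((1 + \<beta>) * (2 * L * (F x - F xs)) + (1 + 1/\<beta>) * (2 * L * (G \<alpha> + H z)))"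
    unfolding A_def sum_D_eq sum_D_aux_points[OF assms] by (simp add: algebra_simps)
  finally show ?thesis using n_gt_0 by (simp add: A_def divide_le_eq mult.commute)
qed

lemma mean_G_update_le:
  "(1 / real n) * (\<Sum>i\<in>{1..n}. G (if i \<in> S then \<alpha>(i := x) else \<alpha>))
     \<le> (1 - 1 / real n) * G \<alpha> + (1 / real n) * (F x - F xs)"
proof -
  have "(\<Sum>i\<in>{1..n}. G (if i \<in> S then \<alpha>(i := x) else \<alpha>))
      = (\<Sum>i\<in>{1..n}. G \<alpha> + (if i \<in> S then (1 / real n) * (D i x - D i (\<alpha> i)) else 0))"
    by (intro sum.cong) (auto simp: G_fun_upd)
  also have "\<dots> = real n * G \<alpha> + (1 / real n) * (\<Sum>i\<in>S. D i x) - G \<alpha>"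
    using S_sub by (simp add: sum.distrib sum.If_cases Int_absorb1 G_eq sum_subtractf
        sum_divide_distrib[symmetric] diff_divide_distrib)
  finally have "(1 / real n) * (\<Sum>i\<in>{1..n}. G (if i \<in> S then \<alpha>(i := x) else \<alpha>))
      = (1 - 1 / real n) * G \<alpha> + (1 / real n) * ((1 / real n) * (\<Sum>i\<in>S. D i x))"
    using n_gt_0 by (simp add: field_simps)
  moreover have "(1 / real n) * ((1 / real n) * (\<Sum>i\<in>S. D i x)) \<le> (1 / real n) * (F x - F xs)"
    unfolding F_gap_eq using S_sub n_gt_0 by (intro mult_left_mono sum_mono2) (auto intro: D_nonneg)
  ultimately show ?thesis by linarith
qed

lemma lyap_step_arith:
  fixes N \<Delta> I V Ga EG Hz :: real
  assumes I: "\<Delta> \<le> I" and V: "V \<le> (1 + \<beta>) * (2 * L * \<Delta>) + (1 + 1/\<beta>) * (2 * L * (Ga + Hz))"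
    and EG: "EG \<le> (1 - 1 / real n) * Ga + (1 / real n) * \<Delta>" and N: "lam / 2 * N \<le> \<Delta>"
    and Ga: "0 \<le> Ga"
  shows "c * N - 2 * c * \<eta> * I + c * \<eta>\<^sup>2 * V + EG \<le> \<rho> * (c * N + Ga) - \<delta> * \<Delta> + K * Hz"
proof -
  have variance_term: "c * \<eta>\<^sup>2 * V \<le> c * \<eta>\<^sup>2 * ((1 + \<beta>) * (2 * L * \<Delta>) + (1 + 1/\<beta>) * (2 * L * (Ga + Hz)))"
    using V c_pos by (intro mult_left_mono) auto
  have descent_term: "2 * c * \<eta> * \<Delta> \<le> 2 * c * \<eta> * I" using I c_pos eta_pos by (intro mult_left_mono) auto
  \<comment> \<open>this is where the step-size condition \<open>cond1\<close> enters\<close>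
  have memory_term: "K * Ga \<le> (1 / real n - 1/\<kappa>) * Ga"
    using cond1 Ga unfolding K_def by (intro mult_right_mono) auto
  have distance_term: "c / \<kappa> * N \<le> (2 * c / (\<kappa> * lam)) * \<Delta>"
  proof -
    have "(2 * c / (\<kappa> * lam)) * (lam / 2 * N) \<le> (2 * c / (\<kappa> * lam)) * \<Delta>"
      using N c_pos kappa_gt lam_pos by (intro mult_left_mono) auto
    thus ?thesis using lam_pos by (simp add: field_simps)
  qed
  have expand: "c * \<eta>\<^sup>2 * ((1 + \<beta>) * (2 * L * \<Delta>) + (1 + 1/\<beta>) * (2 * L * (Ga + Hz)))
      = 2 * L * c * \<eta>\<^sup>2 * (1 + \<beta>) * \<Delta> + K * Ga + K * Hz"
    by (simp add: K_def algebra_simps)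
  show ?thesis using variance_term descent_term memory_term distance_term expand EG unfolding \<rho>_def \<delta>_def
    by (simp add: algebra_simps power2_eq_square)
qed

lemma expected_lyap_step_le:
  assumes "\<forall>i\<in>{1..n} - S. \<alpha> i = z"
  shows "(1 / real n) * (\<Sum>i\<in>{1..n}. lyap (hsag_step n S \<eta> g (x, \<alpha>) i))
           \<le> \<rho> * lyap (x, \<alpha>) - \<delta> * (F x - F xs) + K * H z"
proof -
  define N where "N = (norm (x - xs))\<^sup>2"
  define I where "I = (1 / real n) * (\<Sum>i\<in>{1..n}. inner (dir x \<alpha> i) (x - xs))"
  define V where "V = (1 / real n) * (\<Sum>i\<in>{1..n}. (norm (dir x \<alpha> i))\<^sup>2)"
  define EG where "EG = (1 / real n) * (\<Sum>i\<in>{1..n}. G (if i \<in> S then \<alpha>(i := x) else \<alpha>))"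
  have norm_step: "(norm (x - \<eta> *\<^sub>R dir x \<alpha> i - xs))\<^sup>2
      = N - 2 * \<eta> * inner (dir x \<alpha> i) (x - xs) + \<eta>\<^sup>2 * (norm (dir x \<alpha> i))\<^sup>2" for i
    using power2_norm_diff_scaleR[of "x - xs" \<eta> "dir x \<alpha> i"] by (simp add: N_def algebra_simps)
  have "lyap (hsag_step n S \<eta> g (x, \<alpha>) i) = c * N - 2 * c * \<eta> * inner (dir x \<alpha> i) (x - xs)
      + c * \<eta>\<^sup>2 * (norm (dir x \<alpha> i))\<^sup>2 + G (if i \<in> S then \<alpha>(i := x) else \<alpha>)" for i
    unfolding hsag_step_eq lyap_def fst_conv snd_conv norm_step by (simp add: algebra_simps)
  hence "(\<Sum>i\<in>{1..n}. lyap (hsag_step n S \<eta> g (x, \<alpha>) i))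
      = real n * (c * N) - 2 * c * \<eta> * (\<Sum>i\<in>{1..n}. inner (dir x \<alpha> i) (x - xs))
        + c * \<eta>\<^sup>2 * (\<Sum>i\<in>{1..n}. (norm (dir x \<alpha> i))\<^sup>2)
        + (\<Sum>i\<in>{1..n}. G (if i \<in> S then \<alpha>(i := x) else \<alpha>))"
    by (simp add: sum.distrib sum_subtractf sum_distrib_left)
  hence "(1 / real n) * (\<Sum>i\<in>{1..n}. lyap (hsag_step n S \<eta> g (x, \<alpha>) i))
      = c * N - 2 * c * \<eta> * I + c * \<eta>\<^sup>2 * V + EG"
    unfolding I_def V_def EG_def using n_gt_0 by (simp add: field_simps)
  also have "\<dots> \<le> \<rho> * (c * N + G \<alpha>) - \<delta> * (F x - F xs) + K * H z"
    using F_gap_le_mean_inner_dir mean_power2_norm_dir_le[OF assms] mean_G_update_le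
      quadratic_growth G_nonneg
    by (intro lyap_step_arith) (auto simp: I_def V_def EG_def N_def)
  finally show ?thesis by (simp add: lyap_def N_def)
qed

definition run_sum :: "nat \<Rightarrow> 'a list \<Rightarrow> real" where
  "run_sum j l = (\<Sum>t<j. \<rho> ^ (j - Suc t) * (F (l ! t) - F xs))"

lemma run_sum_Cons: "run_sum (Suc j) (x # l) = \<rho> ^ j * (F x - F xs) + run_sum j l"
  by (simp add: run_sum_def sum.lessThan_Suc_shift del: sum.lessThan_Suc)

lemma expectation_hsag_run_Suc:
  "measure_pmf.expectation (hsag_run n S \<eta> g (Suc j) (x, \<alpha>)) (\<lambda>(l, st'). \<delta> * run_sum (Suc j) l + lyap st')
   = (1 / real n) * (\<Sum>i\<in>{1..n}. \<delta> * (\<rho> ^ j * (F x - F xs))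
       + measure_pmf.expectation (hsag_run n S \<eta> g j (hsag_step n S \<eta> g (x, \<alpha>) i))
           (\<lambda>(l, st'). \<delta> * run_sum j l + lyap st'))"
proof -
  let ?run = "\<lambda>i. hsag_run n S \<eta> g j (hsag_step n S \<eta> g (x, \<alpha>) i)"
  have "measure_pmf.expectation (hsag_run n S \<eta> g (Suc j) (x, \<alpha>)) (\<lambda>(l, st'). \<delta> * run_sum (Suc j) l + lyap st')
      = (\<Sum>i\<in>{1..n}. measure_pmf.expectation (map_pmf (\<lambda>(l, st'). (x # l, st')) (?run i))
           (\<lambda>(l, st'). \<delta> * run_sum (Suc j) l + lyap st') /\<^sub>R real (card {1..n}))"
    unfolding hsag_run.simps fst_conv
  proof (rule pmf_expectation_bind_pmf_of_set)
    show "finite (set_pmf (map_pmf (\<lambda>(l, st'). (x # l, st')) (?run i)))" for i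
      unfolding set_map_pmf by (rule finite_imageI[OF finite_set_pmf_hsag_run[OF n_pos]])
  qed (use n_pos in auto)
  also have "\<dots> = (1 / real n) * (\<Sum>i\<in>{1..n}. measure_pmf.expectation (?run i)
           (\<lambda>p. \<delta> * (\<rho> ^ j * (F x - F xs)) + (case p of (l, st') \<Rightarrow> \<delta> * run_sum j l + lyap st')))"
    by (simp add: integral_map_pmf case_prod_unfold run_sum_Cons sum_distrib_left divide_inverse
        algebra_simps)
  also have "\<dots> = (1 / real n) * (\<Sum>i\<in>{1..n}. \<delta> * (\<rho> ^ j * (F x - F xs))
       + measure_pmf.expectation (?run i) (\<lambda>(l, st'). \<delta> * run_sum j l + lyap st'))"
    by (simp add: expectation_add_const_pmf_finite[OF finite_set_pmf_hsag_run[OF n_pos]])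
  finally show ?thesis .
qed

lemma expected_run_le:
  assumes "\<forall>i\<in>{1..n} - S. snd st i = z"
  shows "measure_pmf.expectation (hsag_run n S \<eta> g j st) (\<lambda>(l, st'). \<delta> * run_sum j l + lyap st')
     \<le> \<rho> ^ j * lyap st + K * H z * (\<Sum>t<j. \<rho> ^ t)"
  using assms
proof (induction j arbitrary: st)
  case 0
  then show ?case by (simp add: run_sum_def)
next
  case (Suc j)
  obtain x \<alpha> where st: "st = (x, \<alpha>)" by (cases st)
  define c0 where "c0 = \<delta> * (\<rho> ^ j * (F x - F xs))"
  have inv: "\<forall>i\<in>{1..n} - S. \<alpha> i = z" using Suc.prems st by simp
  have "measure_pmf.expectation (hsag_run n S \<eta> g (Suc j) st) (\<lambda>(l, st'). \<delta> * run_sum (Suc j) l + lyap st')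
      \<le> (1 / real n) * (\<Sum>i\<in>{1..n}. c0
           + (\<rho> ^ j * lyap (hsag_step n S \<eta> g (x, \<alpha>) i) + K * H z * (\<Sum>t<j. \<rho> ^ t)))"
    unfolding st expectation_hsag_run_Suc c0_def[symmetric] using n_gt_0
    by (intro mult_left_mono sum_mono add_left_mono Suc.IH hsag_step_svrg_points[OF inv]) auto
  also have "\<dots> = c0 + \<rho> ^ j * ((1 / real n) * (\<Sum>i\<in>{1..n}. lyap (hsag_step n S \<eta> g (x, \<alpha>) i)))
      + K * H z * (\<Sum>t<j. \<rho> ^ t)"
    using n_gt_0 by (simp add: sum.distrib sum_distrib_left[symmetric] field_simps)
  also have "\<dots> \<le> c0 + \<rho> ^ j * (\<rho> * lyap (x, \<alpha>) - \<delta> * (F x - F xs) + K * H z) + K * H z * (\<Sum>t<j. \<rho> ^ t)"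
    using expected_lyap_step_le[OF inv] rho_pos by (intro add_right_mono add_left_mono mult_left_mono) auto
  also have "\<dots> = \<rho> ^ Suc j * lyap st + K * H z * (\<Sum>t<Suc j. \<rho> ^ t)"
    by (simp add: c0_def st algebra_simps)
  finally show ?case .
qed

end

locale hsag_epoch_setting = hsag_step_setting +
  fixes m :: nat and \<gamma> \<theta> :: real
  assumes m_pos: "m \<ge> 1"
    and gamma_def: "\<gamma> = \<kappa> * (1 - (1 - 1/\<kappa>) ^ m) *
        (2 * c * \<eta> * (1 - L * \<eta> * (1 + \<beta>)) - 1 / real n - 2 * c / (\<kappa> * lam))"
    and theta_def: "\<theta> = max (2 * c / (\<gamma> * lam) * (1 - 1/\<kappa>) ^ m
          + 2 * L * c * \<eta>\<^sup>2 / \<gamma> * (1 + 1/\<beta>) * \<kappa> * (1 - (1 - 1/\<kappa>) ^ m))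
        ((1 - 1/\<kappa>) ^ m)"
    and gamma_pos: "\<gamma> > 0"
begin

definition \<Phi> :: "'a \<times> (nat \<Rightarrow> 'a) \<Rightarrow> real" where
  "\<Phi> st = F (fst st) - F xs + (1 / \<gamma>) * G (snd st)"

definition W :: real where "W = (\<Sum>t<m. \<rho> ^ t)"

lemma sum_sel_weights_eq_W: "(\<Sum>j\<in>{1..m}. \<rho> ^ (m - j)) = W"
proof -
  have "(\<Sum>j\<in>{1..m}. \<rho> ^ (m - j)) = (\<Sum>t<m. \<rho> ^ (m - Suc t))"
    using sum.atLeast1_atMost_eq[of "\<lambda>j. \<rho> ^ (m - j)" m] by simp
  also have "\<dots> = W" unfolding W_def by (rule sum.nat_diff_reindex)
  finally show ?thesis .
qed

lemma W_pos: "W > 0"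
  unfolding sum_sel_weights_eq_W[symmetric] using rho_pos m_pos by (intro sum_pos) auto

lemma W_eq: "W = \<kappa> * (1 - \<rho> ^ m)"
  using kappa_gt by (simp add: W_def sum_gp_strict \<rho>_def)

lemma gamma_eq: "\<gamma> = W * \<delta>"
  unfolding gamma_def W_eq \<rho>_def \<delta>_def by simp

lemma delta_pos: "\<delta> > 0"
  using gamma_pos W_pos unfolding gamma_eq by (simp add: zero_less_mult_iff)

lemma expected_selection:
  "measure_pmf.expectation
     (map_pmf (\<lambda>j. let y = l ! (j - 1) in (y, \<lambda>i. if i \<in> S then snd st' i else y)) (sel_pmf m \<kappa>)) \<Phi>
   = run_sum m l / W + (1 / \<gamma>) * G (snd st')"
proof -
  have pmf_sel: "pmf (sel_pmf m \<kappa>) j = (if j \<in> {1..m} then \<rho> ^ (m - j) / W else 0)" for j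
    using pmf_sel_pmf[OF kappa_gt m_pos,
        unfolded \<rho>_def[symmetric] sum_sel_weights_eq_W] by simp
  have "G (\<lambda>i. if i \<in> S then snd st' i else y) = G (snd st')" for y
    by (rule G_cong) simp
  hence "\<Phi> (let y = l ! (j - 1) in (y, \<lambda>i. if i \<in> S then snd st' i else y))
      = F (l ! (j - 1)) - F xs + (1 / \<gamma>) * G (snd st')" for j
    by (simp add: \<Phi>_def Let_def)
  hence "measure_pmf.expectation
     (map_pmf (\<lambda>j. let y = l ! (j - 1) in (y, \<lambda>i. if i \<in> S then snd st' i else y)) (sel_pmf m \<kappa>)) \<Phi>
      = (\<Sum>j\<in>{1..m}. (F (l ! (j - 1)) - F xs + (1 / \<gamma>) * G (snd st')) * pmf (sel_pmf m \<kappa>) j)"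
    using set_pmf_sel_pmf_subset[OF kappa_gt m_pos]
    by (simp add: integral_measure_pmf_real[of "{1..m}"] subset_eq)
  also have "\<dots> = (\<Sum>j\<in>{1..m}. (1 / W) * (\<rho> ^ (m - j) * (F (l ! (j - 1)) - F xs))
      + (1 / \<gamma>) * G (snd st') * (1 / W) * \<rho> ^ (m - j))"
    by (intro sum.cong refl) (simp add: pmf_sel algebra_simps)
  also have "\<dots> = (1 / W) * (\<Sum>j\<in>{1..m}. \<rho> ^ (m - j) * (F (l ! (j - 1)) - F xs))
      + (1 / \<gamma>) * G (snd st') * (1 / W) * (\<Sum>j\<in>{1..m}. \<rho> ^ (m - j))"
    by (simp only: sum.distrib sum_distrib_left[symmetric])
  also have "(\<Sum>j\<in>{1..m}. \<rho> ^ (m - j) * (F (l ! (j - 1)) - F xs)) = run_sum m l"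
    unfolding run_sum_def using sum.atLeast1_atMost_eq[of "\<lambda>j. \<rho> ^ (m - j) * (F (l ! (j - 1)) - F xs)" m]
    by simp
  also note sum_sel_weights_eq_W
  finally show ?thesis using W_pos by simp
qed

lemma lyap_bound_le_potential: "(1 / \<gamma>) * (\<rho> ^ m * lyap (x, \<alpha>) + K * H x * W) \<le> \<theta> * \<Phi> (x, \<alpha>)"
proof -
  define \<Delta> where "\<Delta> = F x - F xs"
  have "c * (norm (x - xs))\<^sup>2 \<le> (2 * c / lam) * \<Delta>"
  proof -
    have "(2 * c / lam) * (lam / 2 * (norm (x - xs))\<^sup>2) \<le> (2 * c / lam) * \<Delta>"
      unfolding \<Delta>_def using quadratic_growth c_pos lam_pos by (intro mult_left_mono) auto
    thus ?thesis using lam_pos by simp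
  qed
  hence "\<rho> ^ m * (c * (norm (x - xs))\<^sup>2) \<le> \<rho> ^ m * ((2 * c / lam) * \<Delta>)"
    using rho_pos by (intro mult_left_mono) auto
  moreover have "K * W * H x \<le> K * W * \<Delta>"
    unfolding \<Delta>_def using H_le_F_gap K_nonneg W_pos by (intro mult_left_mono) auto
  ultimately have "\<rho> ^ m * lyap (x, \<alpha>) + K * H x * W \<le> (\<rho> ^ m * (2 * c / lam) + K * W) * \<Delta> + \<rho> ^ m * G \<alpha>"
    by (simp add: lyap_def algebra_simps)
  hence "(1 / \<gamma>) * (\<rho> ^ m * lyap (x, \<alpha>) + K * H x * W)
      \<le> ((\<rho> ^ m * (2 * c / lam) + K * W) / \<gamma>) * \<Delta> + \<rho> ^ m * (G \<alpha> / \<gamma>)"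
    using gamma_pos by (simp add: divide_right_mono add_divide_distrib[symmetric] mult.commute)
  also have "\<dots> \<le> \<theta> * \<Delta> + \<theta> * (G \<alpha> / \<gamma>)"
  proof (intro add_mono mult_right_mono)
    show "(\<rho> ^ m * (2 * c / lam) + K * W) / \<gamma> \<le> \<theta>"
      unfolding theta_def W_eq K_def \<rho>_def by (simp add: add_divide_distrib mult_ac)
    show "\<rho> ^ m \<le> \<theta>" unfolding theta_def \<rho>_def by simp
  qed (use F_gap_nonneg G_nonneg gamma_pos in \<open>auto simp: \<Delta>_def\<close>)
  also have "\<dots> = \<theta> * \<Phi> (x, \<alpha>)" by (simp add: \<Phi>_def \<Delta>_def algebra_simps)
  finally show ?thesis .
qed

lemma expected_epoch_le:
  assumes "\<forall>i\<in>{1..n} - S. \<alpha> i = x"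
  shows "measure_pmf.expectation (hsag_epoch n S \<eta> g m \<kappa> (x, \<alpha>)) \<Phi> \<le> \<theta> * \<Phi> (x, \<alpha>)"
proof -
  let ?R = "hsag_run n S \<eta> g m (x, \<alpha>)"
  have finR: "finite (set_pmf ?R)" by (rule finite_set_pmf_hsag_run[OF n_pos])
  have "measure_pmf.expectation (hsag_epoch n S \<eta> g m \<kappa> (x, \<alpha>)) \<Phi>
      = measure_pmf.expectation ?R (\<lambda>p. measure_pmf.expectation ((\<lambda>(l, st'). map_pmf
          (\<lambda>j. let y = l ! (j - 1) in (y, \<lambda>i. if i \<in> S then snd st' i else y)) (sel_pmf m \<kappa>)) p) \<Phi>)"
    unfolding hsag_epoch_def
    by (rule expectation_bind_pmf_finite[OF finR]) (use finite_set_pmf_sel_pmf[OF kappa_gt m_pos] in \<open>auto split: prod.split\<close>)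
  also have "\<dots> = measure_pmf.expectation ?R (\<lambda>(l, st'). run_sum m l / W + (1 / \<gamma>) * G (snd st'))"
    by (simp only: case_prod_unfold expected_selection)
  also have "\<dots> \<le> measure_pmf.expectation ?R (\<lambda>(l, st'). (1 / \<gamma>) * (\<delta> * run_sum m l + lyap st'))"
    using delta_pos W_pos c_pos
    by (intro expectation_mono_pmf_finite[OF finR]) (auto simp: gamma_eq lyap_def field_simps)
  also have "\<dots> = (1 / \<gamma>) * measure_pmf.expectation ?R (\<lambda>(l, st'). \<delta> * run_sum m l + lyap st')"
    by (simp add: case_prod_unfold)
  also have "\<dots> \<le> (1 / \<gamma>) * (\<rho> ^ m * lyap (x, \<alpha>) + K * H x * W)"
    using expected_run_le[of "(x, \<alpha>)" x m] assms gamma_pos unfolding W_def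
    by (intro mult_left_mono) auto
  also have "\<dots> \<le> \<theta> * \<Phi> (x, \<alpha>)" by (rule lyap_bound_le_potential)
  finally show ?thesis .
qed

lemma expected_potential_contracts:
  "measure_pmf.expectation (hsag_dist n S \<eta> g m \<kappa> x0 (Suc k)) \<Phi>
     \<le> \<theta> * measure_pmf.expectation (hsag_dist n S \<eta> g m \<kappa> x0 k) \<Phi>"
proof -
  let ?P = "hsag_dist n S \<eta> g m \<kappa> x0 k"
  have finP: "finite (set_pmf ?P)" by (rule finite_set_pmf_hsag_dist[OF n_pos kappa_gt m_pos])
  have "measure_pmf.expectation (hsag_dist n S \<eta> g m \<kappa> x0 (Suc k)) \<Phi>
      = measure_pmf.expectation ?P (\<lambda>st. measure_pmf.expectation (hsag_epoch n S \<eta> g m \<kappa> st) \<Phi>)"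
    unfolding hsag_dist.simps
    by (rule expectation_bind_pmf_finite[OF finP finite_set_pmf_hsag_epoch[OF n_pos kappa_gt m_pos]])
  also have "\<dots> \<le> measure_pmf.expectation ?P (\<lambda>st. \<theta> * \<Phi> st)"
  proof (rule expectation_mono_pmf_finite[OF finP])
    fix st assume st: "st \<in> set_pmf ?P"
    obtain x \<alpha> where [simp]: "st = (x, \<alpha>)" by (cases st)
    have "\<forall>i\<in>{1..n} - S. \<alpha> i = x" using hsag_dist_svrg_points st by auto
    thus "measure_pmf.expectation (hsag_epoch n S \<eta> g m \<kappa> st) \<Phi> \<le> \<theta> * \<Phi> st"
      by (simp add: expected_epoch_le)
  qed
  also have "\<dots> = \<theta> * measure_pmf.expectation ?P \<Phi>" by simp
  finally show ?thesis .
qed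

end

theorem theorem1:
  fixes f :: "nat \<Rightarrow> 'a::euclidean_space \<Rightarrow> real"
    and g :: "nat \<Rightarrow> 'a \<Rightarrow> 'a"
    and n m :: nat and S :: "nat set"
    and L lam \<eta> c \<beta> \<kappa> \<gamma> \<theta> :: real
    and x0 xs :: 'a
  assumes n_pos: "n \<ge> 1"
    and conv: "\<And>i. i \<in> {1..n} \<Longrightarrow> convex_on UNIV (f i)"
    and grad: "\<And>i x. i \<in> {1..n} \<Longrightarrow> (f i has_derivative (\<lambda>h. inner (g i x) h)) (at x)"
    and lip: "\<And>i x y. i \<in> {1..n} \<Longrightarrow> norm (g i x - g i y) \<le> L * norm (x - y)"
    and lam_pos: "lam > 0"
    and sconv: "strongly_convex_on UNIV lam (\<lambda>x. (1 / real n) * (\<Sum>i\<in>{1..n}. f i x))"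
    and xs_min: "\<And>y. (1 / real n) * (\<Sum>i\<in>{1..n}. f i xs) \<le> (1 / real n) * (\<Sum>i\<in>{1..n}. f i y)"
    and S_sub: "S \<subseteq> {1..n}"
    and eta_pos: "\<eta> > 0" and m_pos: "m \<ge> 1"
    and c_pos: "c > 0" and beta_pos: "\<beta> > 0" and kappa_gt: "\<kappa> > 1"
    and gamma_def: "\<gamma> = \<kappa> * (1 - (1 - 1/\<kappa>) ^ m) *
        (2 * c * \<eta> * (1 - L * \<eta> * (1 + \<beta>)) - 1 / real n - 2 * c / (\<kappa> * lam))"
    and theta_def: "\<theta> = max (2 * c / (\<gamma> * lam) * (1 - 1/\<kappa>) ^ m
          + 2 * L * c * \<eta>\<^sup>2 / \<gamma> * (1 + 1/\<beta>) * \<kappa> * (1 - (1 - 1/\<kappa>) ^ m))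
        ((1 - 1/\<kappa>) ^ m)"
    and cond1: "1/\<kappa> + 2 * L * c * \<eta>\<^sup>2 * (1 + 1/\<beta>) \<le> 1 / real n"
    and gamma_pos: "\<gamma> > 0"
    and theta_lt: "\<theta> < 1"
  shows "\<forall>k. measure_pmf.expectation (hsag_dist n S \<eta> g m \<kappa> x0 (Suc k))
              (\<lambda>(xt, \<alpha>). (1 / real n) * (\<Sum>i\<in>{1..n}. f i xt) - (1 / real n) * (\<Sum>i\<in>{1..n}. f i xs)
                           + (1 / \<gamma>) * Gtilde n S f g xs \<alpha>)
           \<le> \<theta> * measure_pmf.expectation (hsag_dist n S \<eta> g m \<kappa> x0 k)
              (\<lambda>(xt, \<alpha>). (1 / real n) * (\<Sum>i\<in>{1..n}. f i xt) - (1 / real n) * (\<Sum>i\<in>{1..n}. f i xs)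
                           + (1 / \<gamma>) * Gtilde n S f g xs \<alpha>)"
proof -
  interpret hsag_epoch_setting f g n S L lam \<eta> c \<beta> \<kappa> xs m \<gamma> \<theta>
    using n_pos conv grad lip lam_pos sconv xs_min S_sub eta_pos c_pos beta_pos kappa_gt cond1
      m_pos gamma_def theta_def gamma_pos
    by unfold_locales auto
  have "(\<lambda>(xt, \<alpha>). (1 / real n) * (\<Sum>i\<in>{1..n}. f i xt) - (1 / real n) * (\<Sum>i\<in>{1..n}. f i xs)
          + (1 / \<gamma>) * Gtilde n S f g xs \<alpha>) = \<Phi>"
    by (auto simp: fun_eq_iff \<Phi>_def F_def)
  with expected_potential_contracts show ?thesis by simp
qed

end
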